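(* Let $C\subseteq 2^X$ be an ample class and $r:C\to X(C)$ a representation map. Then: (C1) for every $c\in C$, the cube of $2^X$ with support $r(c)$ that contains $c$ is contained in $C$ (i.e. all out-neighbours of $c$ under $o_r$ belong to a cube of $C$); (C2) for every cube $B$ of $C$, there is a unique $c\in B$ with $r(c)\cap\mathrm{supp}(B)=\varnothing$, i.e. $c$ is the unique sink of $o_r$ restricted to the edges of $B$; consequently $o_r$ is a unique sink orientation on each cube of $C$.
   Context: $X$ is finite; concepts are identified with characteristic functions; $C|Y=\{c|Y:c\in C\}$; $Y$ is shattered by $C$ if $C|Y=2^Y$. A cube of $2^X$ is $\{T\cup Z:Z\subseteq Y\}$, $Y\subseteq X$, $T\subseteq X\setminus Y$, support $\mathrm{supp}=Y$; a cube of $C$ is one contained in $C$. $C$ is ample if every shattered set is the support of a cube of $C$; $X(C)$ is the family of shattered sets. A representation map is a bijection $r:C\to X(C)$ with $c|(r(c)\cup r(c'))\ne c'|(r(c)\cup r(c'))$ for all distinct $c,c'$. For a representation map and any two concepts $c,c'\in C$ with $c\Delta c'=\{x\}$, one has $r(c)\Delta r(c')=\{x\}$; the orientation $o_r$ of the graph $G(C)$ (edges between concepts at Hamming distance 1) orients such an edge from $c$ to $c'$ iff $x\in r(c)\setminus r(c')$. An orientation of a cube is a unique sink orientation if every subcube has exactly one sink (vertex with no outgoing edge inside that subcube). *)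

theory Defs
  imports Main
begin

text \<open>Concepts on a finite domain X are identified with subsets of X
(characteristic functions); a concept class is a set C of subsets of X.\<close>

definition restr :: "'a set set \<Rightarrow> 'a set \<Rightarrow> 'a set set" where
  "restr C Y = (\<lambda>c. c \<inter> Y) ` C"

definition shatters :: "'a set set \<Rightarrow> 'a set \<Rightarrow> bool" where
  "shatters C Y \<longleftrightarrow> restr C Y = Pow Y"

text \<open>The cube of 2^X with support Y and base T (T disjoint from Y).\<close>
definition cube :: "'a set \<Rightarrow> 'a set \<Rightarrow> 'a set set" where
  "cube T Y = {T \<union> Z | Z. Z \<subseteq> Y}"

definition is_cube :: "'a set \<Rightarrow> 'a set \<Rightarrow> 'a set \<Rightarrow> bool" where
  "is_cube X T Y \<longleftrightarrow> Y \<subseteq> X \<and> T \<subseteq> X - Y"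

definition shattered_sets :: "'a set \<Rightarrow> 'a set set \<Rightarrow> 'a set set" where
  "shattered_sets X C = {Y. Y \<subseteq> X \<and> shatters C Y}"

definition ample :: "'a set \<Rightarrow> 'a set set \<Rightarrow> bool" where
  "ample X C \<longleftrightarrow> (\<forall>Y \<in> shattered_sets X C. \<exists>T. is_cube X T Y \<and> cube T Y \<subseteq> C)"

definition representation_map :: "'a set \<Rightarrow> 'a set set \<Rightarrow> ('a set \<Rightarrow> 'a set) \<Rightarrow> bool" where
  "representation_map X C r \<longleftrightarrow> bij_betw r C (shattered_sets X C) \<and>
     (\<forall>c\<in>C. \<forall>c'\<in>C. c \<noteq> c' \<longrightarrow> c \<inter> (r c \<union> r c') \<noteq> c' \<inter> (r c \<union> r c'))"

definition arc :: "'a set set \<Rightarrow> ('a set \<Rightarrow> 'a set) \<Rightarrow> 'a set \<Rightarrow> 'a set \<Rightarrow> bool" where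
  "arc C r c c' \<longleftrightarrow> c \<in> C \<and> c' \<in> C \<and>
     (\<exists>x. (c - c') \<union> (c' - c) = {x} \<and> x \<in> r c - r c')"

definition is_sink :: "'a set set \<Rightarrow> ('a set \<Rightarrow> 'a set) \<Rightarrow> 'a set set \<Rightarrow> 'a set \<Rightarrow> bool" where
  "is_sink C r S c \<longleftrightarrow> c \<in> S \<and> \<not> (\<exists>c'\<in>S. arc C r c c')"

definition unique_sink_orientation ::
  "'a set \<Rightarrow> 'a set set \<Rightarrow> ('a set \<Rightarrow> 'a set) \<Rightarrow> 'a set set \<Rightarrow> bool" where
  "unique_sink_orientation X C r B \<longleftrightarrow>
     (\<forall>T' Y'. is_cube X T' Y' \<and> cube T' Y' \<subseteq> B \<longrightarrow> (\<exists>!c. is_sink C r (cube T' Y') c))"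

end

(* A representation map r identifies C|S with the concepts whose representative lies in S:
   these are separated by their traces on S, and by Pajor's lemma there are at least |C|S| of
   them.  For S = X - Y this gives, in every cube of C with support Y, a concept whose
   representative avoids Y; it is unique by the separation property, and it is the sink of o_r
   on the cube, because an edge in a direction x \<in> r c leads to a concept whose representative
   misses x.  For (C1), induction on W \<subseteq> r c shows that on the concepts agreeing with c outside W
   the trace r d \<inter> W takes every proper subset of W exactly once (Moebius inversion); with c itself
   these are 2 ^ |W| concepts, so they fill the cube. *)

theory Submission
  imports Defs
begin

lemma mem_cube_iff:
  assumes "T \<inter> Y = {}"
  shows "q \<in> cube T Y \<longleftrightarrow> q - Y = T"
proof
  assume "q \<in> cube T Y"
  then obtain Z where "q = T \<union> Z" "Z \<subseteq> Y" unfolding cube_def by blast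
  then show "q - Y = T" using assms by blast
next
  assume "q - Y = T"
  then have "q = T \<union> (q \<inter> Y)" by blast
  then show "q \<in> cube T Y" unfolding cube_def by blast
qed

lemma card_cube:
  assumes "finite Y" and "T \<inter> Y = {}"
  shows "card (cube T Y) = 2 ^ card Y"
proof -
  have "cube T Y = (\<lambda>Z. T \<union> Z) ` Pow Y" unfolding cube_def by auto
  moreover have "inj_on (\<lambda>Z. T \<union> Z) (Pow Y)" using assms(2) by (auto intro!: inj_onI)
  ultimately show ?thesis using assms(1) by (simp add: card_image card_Pow)
qed

lemma restr_restr: "Y \<subseteq> S \<Longrightarrow> restr (restr C S) Y = restr C Y"
  unfolding restr_def by (auto simp: image_image Int_assoc Int_absorb1 inf.absorb_iff2)

lemma shatters_restr: "Y \<subseteq> S \<Longrightarrow> shatters (restr C S) Y \<longleftrightarrow> shatters C Y"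
  unfolding shatters_def by (simp add: restr_restr)

lemma shatters_iff: "shatters C Y \<longleftrightarrow> Pow Y \<subseteq> restr C Y"
  unfolding shatters_def restr_def by blast

lemma card_eq_card_restr_add_card_doubled:
  assumes "finite D" and "x \<notin> S" and "D \<subseteq> Pow (insert x S)"
  shows "card D = card (restr D S) + card {t \<in> Pow S. t \<in> D \<and> insert x t \<in> D}"
proof -
  define A0 where "A0 = {d \<in> D. x \<notin> d}"
  define A1 where "A1 = {d \<in> D. x \<in> d}"
  have "d \<inter> S = d - {x}" if "d \<in> D" for d
    using that assms(2,3) by blast
  then have "restr D S = A0 \<union> (\<lambda>d. d - {x}) ` A1"
    unfolding restr_def A0_def A1_def by auto
  moreover have "{t \<in> Pow S. t \<in> D \<and> insert x t \<in> D} = A0 \<inter> (\<lambda>d. d - {x}) ` A1"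
  proof (intro set_eqI iffI)
    fix t assume "t \<in> {t \<in> Pow S. t \<in> D \<and> insert x t \<in> D}"
    then have "t \<in> A0" "insert x t \<in> A1" "t = insert x t - {x}"
      using assms(2) unfolding A0_def A1_def by auto
    then show "t \<in> A0 \<inter> (\<lambda>d. d - {x}) ` A1" by blast
  next
    fix t assume "t \<in> A0 \<inter> (\<lambda>d. d - {x}) ` A1"
    then obtain d where "d \<in> D" "x \<in> d" "t = d - {x}" "t \<in> D"
      unfolding A0_def A1_def by blast
    moreover from this have "insert x t = d" by blast
    ultimately show "t \<in> {t \<in> Pow S. t \<in> D \<and> insert x t \<in> D}" using assms(3) by auto
  qed
  moreover have fin_A: "finite A0" "finite A1" using assms(1) unfolding A0_def A1_def by auto
  moreover have "card D = card A0 + card A1"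
  proof -
    have "D = A0 \<union> A1" "A0 \<inter> A1 = {}" unfolding A0_def A1_def by auto
    then show ?thesis using fin_A by (simp add: card_Un_disjoint)
  qed
  moreover have "card A1 = card ((\<lambda>d. d - {x}) ` A1)"
    by (rule card_image[symmetric]) (auto simp: inj_on_def A1_def)
  moreover have "card A0 + card ((\<lambda>d. d - {x}) ` A1)
      = card (A0 \<union> (\<lambda>d. d - {x}) ` A1) + card (A0 \<inter> (\<lambda>d. d - {x}) ` A1)"
    by (rule card_Un_Int) (use fin_A in auto)
  ultimately show ?thesis by simp
qed

lemma shatters_insert_doubled:
  assumes "x \<notin> S" and "Y \<subseteq> S" and "shatters {t \<in> Pow S. t \<in> D \<and> insert x t \<in> D} Y"
  shows "shatters D (insert x Y)"
  unfolding shatters_iff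
proof
  fix Z assume Z: "Z \<in> Pow (insert x Y)"
  then have "Z - {x} \<in> restr {t \<in> Pow S. t \<in> D \<and> insert x t \<in> D} Y"
    using assms(3) unfolding shatters_iff by blast
  then obtain t where t: "t \<in> D" "insert x t \<in> D" "t \<subseteq> S" "Z - {x} = t \<inter> Y"
    unfolding restr_def by auto
  then have "x \<notin> t" using assms(1) by blast
  show "Z \<in> restr D (insert x Y)"
  proof (cases "x \<in> Z")
    case True
    then have "Z = insert x t \<inter> insert x Y" using t(4) Z by blast
    then show ?thesis using t(2) unfolding restr_def by blast
  next
    case False
    then have "Z = t \<inter> insert x Y" using t(4) Z \<open>x \<notin> t\<close> by blast
    then show ?thesis using t(1) unfolding restr_def by blast
  qed
qed

text \<open>Pajor's form of the Sauer--Shelah lemma.\<close>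

lemma card_le_card_shattered_sets:
  assumes "finite S" and "D \<subseteq> Pow S"
  shows "card D \<le> card (shattered_sets S D)"
  using assms
proof (induction S arbitrary: D rule: finite_induct)
  case empty
  then have "D = {} \<or> D = {{}}" by (simp add: subset_singletonD)
  moreover have "shattered_sets {} {{}} = {{}}"
    unfolding shattered_sets_def shatters_def restr_def by auto
  ultimately show ?case by (metis card.empty le_refl zero_le)
next
  case (insert x S)
  define D1 where "D1 = {t \<in> Pow S. t \<in> D \<and> insert x t \<in> D}"
  define E0 where "E0 = shattered_sets S (restr D S)"
  define E1 where "E1 = insert x ` shattered_sets S D1"
  have "finite D"
    using insert.prems insert.hyps(1) by (meson finite_Pow_iff finite_insert finite_subset)
  then have "card D = card (restr D S) + card D1"
    unfolding D1_def using insert.hyps(2) insert.prems by (rule card_eq_card_restr_add_card_doubled)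
  also have "\<dots> \<le> card E0 + card (shattered_sets S D1)"
    unfolding E0_def D1_def by (intro add_mono insert.IH) (auto simp: restr_def)
  also have "card (shattered_sets S D1) = card E1" unfolding E1_def
    by (rule card_image[symmetric]) (use insert.hyps(2) in \<open>auto simp: inj_on_def shattered_sets_def\<close>)
  also have "card E0 + card E1 = card (E0 \<union> E1)"
  proof (rule card_Un_disjoint[symmetric])
    show "finite E0" "finite E1"
      unfolding E0_def E1_def shattered_sets_def using insert.hyps(1) by auto
    show "E0 \<inter> E1 = {}"
      unfolding E0_def E1_def shattered_sets_def using insert.hyps(2) by auto
  qed
  also have "\<dots> \<le> card (shattered_sets (insert x S) D)"
  proof (rule card_mono)
    show "finite (shattered_sets (insert x S) D)"
      using insert.hyps(1) unfolding shattered_sets_def by simp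
    have "E0 \<subseteq> shattered_sets (insert x S) D"
      unfolding E0_def shattered_sets_def using shatters_restr[of _ S D] by blast
    moreover have "E1 \<subseteq> shattered_sets (insert x S) D"
      unfolding E1_def D1_def shattered_sets_def
      using shatters_insert_doubled[OF insert.hyps(2)] by blast
    ultimately show "E0 \<union> E1 \<subseteq> shattered_sets (insert x S) D" by blast
  qed
  finally show ?case .
qed

lemma representation_map_subset:
  "representation_map X C r \<Longrightarrow> d \<in> C \<Longrightarrow> r d \<subseteq> X"
  unfolding representation_map_def bij_betw_def shattered_sets_def by blast

lemma representation_map_eqI:
  assumes "representation_map X C r" and "d \<in> C" and "d' \<in> C"
    and "d \<inter> (r d \<union> r d') = d' \<inter> (r d \<union> r d')"
  shows "d = d'"
  using assms unfolding representation_map_def by blast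

text \<open>The concepts represented inside \<open>S\<close> realise every trace on \<open>S\<close> exactly once: they
  are separated on \<open>S\<close>, and there are as many of them as sets inside \<open>S\<close> shattered by \<open>C\<close>,
  i.e.\ by \<open>C|S\<close>, which is at least \<open>|C|S|\<close> by Pajor's lemma.\<close>

lemma bij_betw_rep_within_restr:
  assumes "finite X" and "C \<subseteq> Pow X" and rm: "representation_map X C r" and "S \<subseteq> X"
  shows "bij_betw (\<lambda>d. d \<inter> S) {d \<in> C. r d \<subseteq> S} (restr C S)"
proof -
  define R where "R = {d \<in> C. r d \<subseteq> S}"
  have bij_r: "bij_betw r C (shattered_sets X C)"
    using rm unfolding representation_map_def by simp
  have inj: "inj_on (\<lambda>d. d \<inter> S) R"
  proof (rule inj_onI)
    fix d d' assume "d \<in> R" "d' \<in> R" "d \<inter> S = d' \<inter> S"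
    then show "d = d'"
      using representation_map_eqI[OF rm, of d d'] unfolding R_def by blast
  qed
  have "r ` R = {Y \<in> r ` C. Y \<subseteq> S}" unfolding R_def by blast
  also have "\<dots> = shattered_sets S (restr C S)"
    using bij_r \<open>S \<subseteq> X\<close> unfolding bij_betw_def shattered_sets_def
    by (auto simp: shatters_restr)
  finally have "card R = card (shattered_sets S (restr C S))"
    using bij_r card_image[of r R] inj_on_subset[of r C R]
    unfolding R_def bij_betw_def by (metis (no_types, lifting) mem_Collect_eq subsetI)
  moreover have "card (restr C S) \<le> card (shattered_sets S (restr C S))"
  proof (rule card_le_card_shattered_sets)
    show "finite S" using assms(1,4) by (rule finite_subset[rotated])
    show "restr C S \<subseteq> Pow S" unfolding restr_def by auto
  qed
  moreover have "(\<lambda>d. d \<inter> S) ` R \<subseteq> restr C S" unfolding R_def restr_def by auto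
  moreover have "finite (restr C S)"
    using assms(1,2) unfolding restr_def by (meson finite_Pow_iff finite_imageI finite_subset)
  ultimately have "(\<lambda>d. d \<inter> S) ` R = restr C S"
    using card_image[OF inj] by (metis card_seteq)
  with inj show ?thesis unfolding R_def bij_betw_def by simp
qed

lemma card_rep_within_cube:
  assumes "finite X" and CX: "C \<subseteq> Pow X" and rm: "representation_map X C r"
    and "W \<subseteq> X" and TW: "T \<inter> W = {}" and "A \<subseteq> W"
  shows "card {d \<in> C \<inter> cube T W. r d \<inter> W \<subseteq> A} = card (restr (C \<inter> cube T W) A)"
proof (rule bij_betw_same_card[of "\<lambda>d. d \<inter> A"], unfold bij_betw_def, intro conjI)
  have below: "d - W = T" "r d \<subseteq> X" if "d \<in> C \<inter> cube T W" for d
    using that mem_cube_iff[OF TW] representation_map_subset[OF rm] by auto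
  show "inj_on (\<lambda>d. d \<inter> A) {d \<in> C \<inter> cube T W. r d \<inter> W \<subseteq> A}"
  proof (rule inj_onI)
    fix d d' assume d: "d \<in> {d \<in> C \<inter> cube T W. r d \<inter> W \<subseteq> A}"
      and d': "d' \<in> {d \<in> C \<inter> cube T W. r d \<inter> W \<subseteq> A}" and "d \<inter> A = d' \<inter> A"
    moreover have "d - W = d' - W" using d d' below by simp
    moreover have "r d \<inter> W \<subseteq> A" "r d' \<inter> W \<subseteq> A" using d d' by simp_all
    ultimately have "d \<inter> (r d \<union> r d') = d' \<inter> (r d \<union> r d')" by blast
    then show "d = d'" using d d' representation_map_eqI[OF rm, of d d'] by simp
  qed
  show "(\<lambda>d. d \<inter> A) ` {d \<in> C \<inter> cube T W. r d \<inter> W \<subseteq> A} = restr (C \<inter> cube T W) A"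
  proof (intro equalityI subsetI)
    fix e assume "e \<in> restr (C \<inter> cube T W) A"
    then obtain d0 where d0: "d0 \<in> C \<inter> cube T W" "e = d0 \<inter> A" unfolding restr_def by blast
    define S where "S = (X - W) \<union> A"
    have "S \<subseteq> X" using assms(4,6) unfolding S_def by blast
    have "d0 \<inter> S \<in> restr C S" using d0 unfolding restr_def by blast
    also have "restr C S = (\<lambda>d. d \<inter> S) ` {d \<in> C. r d \<subseteq> S}"
      using bij_betw_imp_surj_on[OF bij_betw_rep_within_restr[OF assms(1-3) \<open>S \<subseteq> X\<close>]] ..
    finally obtain d where d: "d \<in> C" "r d \<subseteq> S" "d \<inter> S = d0 \<inter> S" by auto
    have "d \<subseteq> X" "d0 \<subseteq> X" using d(1) d0(1) CX by auto
    then have "d - W = d0 - W" using d(3) unfolding S_def by blast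
    then have "d \<in> C \<inter> cube T W" using d0 below d(1) mem_cube_iff[OF TW] by auto
    moreover have "e = d \<inter> A" using d(3) d0(2) unfolding S_def by blast
    moreover have "r d \<inter> W \<subseteq> A" using d(2) unfolding S_def by blast
    ultimately show "e \<in> (\<lambda>d. d \<inter> A) ` {d \<in> C \<inter> cube T W. r d \<inter> W \<subseteq> A}" by blast
  qed (auto simp: restr_def)
qed

lemma card_psubsets:
  assumes "finite A"
  shows "card {B. B \<subset> A} = 2 ^ card A - 1"
proof -
  have "{B. B \<subset> A} = Pow A - {A}" by auto
  then show ?thesis using assms by (simp add: card_Pow)
qed

lemma card_psubset_level_sets:
  assumes "finite D" and "finite A"
  shows "card {d \<in> D. f d \<subset> A} = (\<Sum>B \<in> {B. B \<subset> A}. card {d \<in> D. f d = B})"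
proof -
  have "{d \<in> D. f d \<subset> A} = (\<Union>B \<in> {B. B \<subset> A}. {d \<in> D. f d = B})" by auto
  moreover have "finite {B. B \<subset> A}" using assms(2) by (simp add: psubset_eq)
  ultimately show ?thesis using assms(1) by (simp only:) (rule card_UN_disjoint, auto)
qed

text \<open>Moebius inversion on the Boolean lattice below \<open>W\<close>.\<close>

lemma card_level_set_eq_1:
  assumes "finite D" and "finite W"
    and count: "\<And>A. A \<subset> W \<Longrightarrow> card {d \<in> D. f d \<subseteq> A} = 2 ^ card A"
    and "A \<subset> W"
  shows "card {d \<in> D. f d = A} = 1"
  using \<open>A \<subset> W\<close>
proof (induction "card A" arbitrary: A rule: less_induct)
  case less
  have "finite A" using less.prems assms(2) finite_subset by blast
  have "card {d \<in> D. f d \<subset> A} = (\<Sum>B \<in> {B. B \<subset> A}. 1)"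
    unfolding card_psubset_level_sets[OF assms(1) \<open>finite A\<close>]
  proof (rule sum.cong)
    fix B assume "B \<in> {B. B \<subset> A}"
    then have "card B < card A" "B \<subset> W"
      using \<open>finite A\<close> less.prems psubset_card_mono by auto
    then show "card {d \<in> D. f d = B} = 1" using less.hyps by blast
  qed simp
  also have "\<dots> = 2 ^ card A - 1" using card_psubsets[OF \<open>finite A\<close>] by simp
  finally have "card {d \<in> D. f d \<subset> A} = 2 ^ card A - 1" .
  moreover have "{d \<in> D. f d \<subseteq> A} = {d \<in> D. f d = A} \<union> {d \<in> D. f d \<subset> A}" by auto
  then have "card {d \<in> D. f d \<subseteq> A} = card {d \<in> D. f d = A} + card {d \<in> D. f d \<subset> A}"
    using assms(1) by (simp add: card_Un_disjoint disjoint_iff)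
  moreover have "(1::nat) \<le> 2 ^ card A" by simp
  ultimately show ?case using count[OF less.prems] by linarith
qed

lemma two_pow_card_le_card:
  assumes "finite D" and "finite W"
    and count: "\<And>A. A \<subset> W \<Longrightarrow> card {d \<in> D. f d \<subseteq> A} = 2 ^ card A"
    and "d0 \<in> D" and "f d0 = W"
  shows "2 ^ card W \<le> card D"
proof -
  have "card {d \<in> D. f d \<subset> W} = (\<Sum>A \<in> {A. A \<subset> W}. 1)"
    unfolding card_psubset_level_sets[OF assms(1,2)]
    using card_level_set_eq_1[OF assms(1-3)] by (intro sum.cong) auto
  also have "\<dots> = 2 ^ card W - 1" using card_psubsets[OF assms(2)] by simp
  finally have "card {d \<in> D. f d \<subset> W} = 2 ^ card W - 1" .
  moreover have "{d \<in> D. f d \<subset> W} \<subset> D" using assms(4,5) by auto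
  then have "card {d \<in> D. f d \<subset> W} < card D" using assms(1) by (rule psubset_card_mono[rotated])
  ultimately show ?thesis by simp
qed

lemma cube_rep_subset:
  assumes "finite X" and CX: "C \<subseteq> Pow X" and rm: "representation_map X C r"
    and "c \<in> C" and "W \<subseteq> r c"
  shows "cube (c - W) W \<subseteq> C"
  using \<open>W \<subseteq> r c\<close>
proof (induction "card W" arbitrary: W rule: less_induct)
  case less
  define F where "F = C \<inter> cube (c - W) W"
  have "W \<subseteq> X" using less.prems representation_map_subset[OF rm \<open>c \<in> C\<close>] by blast
  then have "finite W" using assms(1) by (rule finite_subset)
  have TW: "(c - W) \<inter> W = {}" by blast
  have "card {d \<in> F. r d \<inter> W \<subseteq> A} = 2 ^ card A" if "A \<subset> W" for A
  proof -
    have "Pow A \<subseteq> restr F A"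
    proof
      fix Z assume "Z \<in> Pow A"
      have "card A < card W" using \<open>A \<subset> W\<close> \<open>finite W\<close> by (rule psubset_card_mono[rotated])
      then have "cube (c - A) A \<subseteq> C" using less.hyps less.prems \<open>A \<subset> W\<close> by blast
      moreover have "(c - A) \<union> Z \<in> cube (c - A) A" using \<open>Z \<in> Pow A\<close> unfolding cube_def by blast
      moreover have "(c - A) \<union> Z \<in> cube (c - W) W"
        using \<open>Z \<in> Pow A\<close> \<open>A \<subset> W\<close> mem_cube_iff[OF TW] by blast
      ultimately have "(c - A) \<union> Z \<in> F" unfolding F_def by blast
      moreover have "Z = ((c - A) \<union> Z) \<inter> A" using \<open>Z \<in> Pow A\<close> by blast
      ultimately show "Z \<in> restr F A" unfolding restr_def by blast
    qed
    then have "restr F A = Pow A" unfolding restr_def by blast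
    moreover have "finite A" using \<open>A \<subset> W\<close> \<open>finite W\<close> finite_subset by blast
    ultimately show ?thesis
      using card_rep_within_cube[OF assms(1-3) \<open>W \<subseteq> X\<close> TW] \<open>A \<subset> W\<close>
      unfolding F_def by (simp add: card_Pow)
  qed
  moreover have "c \<in> F" unfolding F_def using \<open>c \<in> C\<close> mem_cube_iff[OF TW] by blast
  moreover have "finite (cube (c - W) W)" using \<open>finite W\<close> unfolding cube_def by simp
  ultimately have "2 ^ card W \<le> card F"
    using two_pow_card_le_card[of F W "\<lambda>d. r d \<inter> W" c] less.prems \<open>finite W\<close>
    unfolding F_def by auto
  then have "F = cube (c - W) W"
    using card_cube[OF \<open>finite W\<close> TW] \<open>finite (cube (c - W) W)\<close>
    by (intro card_seteq) (auto simp: F_def)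
  then show ?case unfolding F_def by blast
qed

lemma ex_rep_disjoint_in_cube:
  assumes "finite X" and CX: "C \<subseteq> Pow X" and rm: "representation_map X C r"
    and cube: "is_cube X T Y" and "cube T Y \<subseteq> C"
  shows "\<exists>c \<in> cube T Y. r c \<inter> Y = {}"
proof -
  have TY: "T \<inter> Y = {}" "T \<subseteq> X" using cube unfolding is_cube_def by auto
  then have "T \<in> C" using \<open>cube T Y \<subseteq> C\<close> mem_cube_iff[OF TY(1)] by blast
  then have "T \<in> restr C (X - Y)" using TY unfolding restr_def by blast
  also have "restr C (X - Y) = (\<lambda>d. d \<inter> (X - Y)) ` {d \<in> C. r d \<subseteq> X - Y}"
    using bij_betw_imp_surj_on[OF bij_betw_rep_within_restr[OF assms(1-3)]] by blast
  finally obtain d where d: "d \<in> C" "r d \<subseteq> X - Y" "T = d \<inter> (X - Y)" by blast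
  then have "d - Y = T" using CX by blast
  then show ?thesis using d(2) mem_cube_iff[OF TY(1)] by blast
qed

lemma rep_disjoint_in_cube_unique:
  assumes rm: "representation_map X C r" and "T \<inter> Y = {}" and "cube T Y \<subseteq> C"
    and "c \<in> cube T Y" "r c \<inter> Y = {}" and "c' \<in> cube T Y" "r c' \<inter> Y = {}"
  shows "c = c'"
proof -
  have "c - Y = c' - Y" using assms(4,6) mem_cube_iff[OF assms(2)] by blast
  then have "c \<inter> (r c \<union> r c') = c' \<inter> (r c \<union> r c')" using assms(5,7) by blast
  then show ?thesis using representation_map_eqI[OF rm] assms(3,4,6) by blast
qed

text \<open>The edge of the cube through \<open>c\<close> in direction \<open>x\<close> contains a concept whose
  representative avoids \<open>x\<close>; it is not \<open>c\<close>, so the edge is oriented away from \<open>c\<close>.\<close>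

lemma ex_arc_in_cube:
  assumes "finite X" and CX: "C \<subseteq> Pow X" and rm: "representation_map X C r"
    and cube: "is_cube X T Y" and sub: "cube T Y \<subseteq> C"
    and "c \<in> cube T Y" and x: "x \<in> r c" "x \<in> Y"
  shows "\<exists>d \<in> cube T Y. arc C r c d"
proof -
  have TY: "T \<inter> Y = {}" "Y \<subseteq> X" using cube unfolding is_cube_def by auto
  have "c \<subseteq> X" using \<open>c \<in> cube T Y\<close> sub CX by blast
  then have edge: "is_cube X (c - {x}) {x}" unfolding is_cube_def using x TY by blast
  have edge_iff: "q \<in> cube (c - {x}) {x} \<longleftrightarrow> q - {x} = c - {x}" for q
    by (rule mem_cube_iff) blast
  have "c - Y = T" using \<open>c \<in> cube T Y\<close> mem_cube_iff[OF TY(1)] by blast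
  have edge_sub: "cube (c - {x}) {x} \<subseteq> cube T Y"
  proof
    fix q assume "q \<in> cube (c - {x}) {x}"
    then have "q - {x} = c - {x}" using edge_iff by blast
    then have "q - Y = T" using \<open>c - Y = T\<close> x(2) by blast
    then show "q \<in> cube T Y" using mem_cube_iff[OF TY(1)] by blast
  qed
  obtain d where d: "d \<in> cube (c - {x}) {x}" "r d \<inter> {x} = {}"
    using ex_rep_disjoint_in_cube[OF assms(1-3) edge] edge_sub sub by blast
  have "d \<noteq> c" using d(2) x(1) by blast
  moreover have "d - {x} = c - {x}" using d(1) edge_iff by blast
  ultimately have "(c - d) \<union> (d - c) = {x}" by blast
  then have "arc C r c d"
    using d edge_sub sub \<open>c \<in> cube T Y\<close> x(1) unfolding arc_def by blast
  then show ?thesis using d(1) edge_sub by blast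
qed

lemma rep_disjoint_iff_sink:
  assumes "finite X" and "C \<subseteq> Pow X" and "representation_map X C r"
    and cube: "is_cube X T Y" and "cube T Y \<subseteq> C"
  shows "c \<in> cube T Y \<and> r c \<inter> Y = {} \<longleftrightarrow> is_sink C r (cube T Y) c"
proof
  have TY: "T \<inter> Y = {}" using cube unfolding is_cube_def by auto
  assume c: "c \<in> cube T Y \<and> r c \<inter> Y = {}"
  have "\<not> arc C r c c'" if "c' \<in> cube T Y" for c'
  proof
    assume "arc C r c c'"
    then obtain x where x: "(c - c') \<union> (c' - c) = {x}" "x \<in> r c" unfolding arc_def by blast
    have "c - Y = c' - Y" using c that mem_cube_iff[OF TY] by auto
    then show False using x c by blast
  qed
  then show "is_sink C r (cube T Y) c" using c unfolding is_sink_def by blast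
next
  assume sink: "is_sink C r (cube T Y) c"
  then have "c \<in> cube T Y" unfolding is_sink_def by blast
  moreover have "r c \<inter> Y = {}"
    using ex_arc_in_cube[OF assms \<open>c \<in> cube T Y\<close>] sink unfolding is_sink_def by blast
  ultimately show "c \<in> cube T Y \<and> r c \<inter> Y = {}" by blast
qed

theorem corollary6p2:
  fixes X :: "'a set" and C :: "'a set set" and r :: "'a set \<Rightarrow> 'a set"
  assumes "finite X" and "C \<subseteq> Pow X" and "ample X C"
    and "representation_map X C r"
  shows "(\<forall>c\<in>C. cube (c - r c) (r c) \<subseteq> C)
    \<and> (\<forall>T Y. is_cube X T Y \<and> cube T Y \<subseteq> C \<longrightarrow>
          (\<exists>!c. c \<in> cube T Y \<and> r c \<inter> Y = {})
        \<and> (\<forall>c. (c \<in> cube T Y \<and> r c \<inter> Y = {}) \<longleftrightarrow> is_sink C r (cube T Y) c)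
        \<and> unique_sink_orientation X C r (cube T Y))"
proof -
  note sink_iff = rep_disjoint_iff_sink[OF assms(1,2,4)]
  have unique_rep_disjoint: "\<exists>!c. c \<in> cube T Y \<and> r c \<inter> Y = {}"
    if "is_cube X T Y" "cube T Y \<subseteq> C" for T Y
  proof -
    have "T \<inter> Y = {}" using that(1) unfolding is_cube_def by blast
    then show ?thesis
      using ex_rep_disjoint_in_cube[OF assms(1,2,4) that]
        rep_disjoint_in_cube_unique[OF assms(4) _ that(2)] by blast
  qed
  have "unique_sink_orientation X C r (cube T Y)" if "cube T Y \<subseteq> C" for T Y
    unfolding unique_sink_orientation_def
  proof (intro allI impI)
    fix T' Y' assume subcube: "is_cube X T' Y' \<and> cube T' Y' \<subseteq> cube T Y"
    then have "is_cube X T' Y'" "cube T' Y' \<subseteq> C" using that by auto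
    then show "\<exists>!c. is_sink C r (cube T' Y') c"
      using unique_rep_disjoint by (simp flip: sink_iff)
  qed
  with unique_rep_disjoint sink_iff cube_rep_subset[OF assms(1,2,4)] show ?thesis
    by simp
qed

end
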